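(* Let $D$ be a strongly connected digraph, $T$ a DFS tree of $D$ rooted at $r$ of length $t\ge 1$ with levels $V_0,\ldots,V_t$, and let $G^D$ be the backward spine of $D$ relative to $T$. If $c'$ is a proper coloring of $G^D$ with $\chi(G^D)$ colors, then the map $c$ on $V(D)$ defined by $c(v)=c'(V_i)$ for $v\in V_i$ is an acyclic coloring of $D$. In particular, $\chi_A(D)\le\chi(G^D)$.
   Context: Digraphs are finite and loopless; paths and cycles are directed; $l(\cdot)$ denotes length. A DFS tree $T$ of a strongly connected digraph $D$ rooted at $r$ is the spanning out-branching produced by a depth-first search started at $r$. $P_u$ is the unique $ru$-path in $T$; the length $t$ of $T$ is the length of a longest path in $T$; the levels are $V_i=\{u: l(P_u)=i\}$, $0\le i\le t$. A vertex $u$ is a descendant of $v$ if $T$ has a $vu$-path; an arc $(u,v)$ is a backward arc if $u$ is a descendant of $v$. The backward spine $G^D$ is the undirected graph with vertex set $\{V_0,\ldots,V_t\}$ in which, for $i>j$, $V_iV_j$ is an edge iff there is a backward arc $(u,v)$ with $u\in V_i$, $v\in V_j$. An acyclic coloring is a coloring whose color classes induce no directed cycle; $\chi_A$ is the minimum number of colors in such a coloring. *)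

theory Defs
  imports Main
begin

definition digraph :: "'a set \<Rightarrow> ('a \<times> 'a) set \<Rightarrow> bool" where
  "digraph V A \<longleftrightarrow> finite V \<and> V \<noteq> {} \<and> A \<subseteq> V \<times> V \<and> (\<forall>v. (v, v) \<notin> A)"

definition strongly_connected :: "'a set \<Rightarrow> ('a \<times> 'a) set \<Rightarrow> bool" where
  "strongly_connected V A \<longleftrightarrow> (\<forall>u\<in>V. \<forall>v\<in>V. (u, v) \<in> A\<^sup>*)"

definition out_branching :: "'a set \<Rightarrow> ('a \<times> 'a) set \<Rightarrow> 'a \<Rightarrow> ('a \<times> 'a) set \<Rightarrow> bool" where
  "out_branching V A r T \<longleftrightarrow> r \<in> V \<and> T \<subseteq> A \<and>
     (\<forall>u. (u, r) \<notin> T) \<and>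
     (\<forall>v\<in>V - {r}. \<exists>!u. (u, v) \<in> T) \<and>
     (\<forall>v\<in>V. (r, v) \<in> T\<^sup>*)"

text \<open>T is a DFS tree of (V,A) rooted at r: a spanning out-branching admitting a
  discovery order (preorder of T) in which every arc leading to a later
  discovered vertex ends at a descendant of its tail.  This is the standard
  characterization of the trees produced by depth-first search.\<close>
definition dfs_tree :: "'a set \<Rightarrow> ('a \<times> 'a) set \<Rightarrow> 'a \<Rightarrow> ('a \<times> 'a) set \<Rightarrow> bool" where
  "dfs_tree V A r T \<longleftrightarrow> out_branching V A r T \<and>
     (\<exists>ord :: 'a \<Rightarrow> nat. inj_on ord V \<and>
        (\<forall>(u, v)\<in>T. ord u < ord v) \<and>
        (\<forall>u\<in>V. \<forall>w\<in>V. \<forall>x\<in>V. (u, w) \<in> T\<^sup>* \<and> ord u \<le> ord x \<and> ord x \<le> ord w \<longrightarrow> (u, x) \<in> T\<^sup>*) \<and>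
        (\<forall>(u, v)\<in>A. ord u < ord v \<longrightarrow> (u, v) \<in> T\<^sup>*))"

definition level :: "('a \<times> 'a) set \<Rightarrow> 'a \<Rightarrow> 'a \<Rightarrow> nat" where
  "level T r u = (LEAST n. (r, u) \<in> T ^^ n)"

text \<open>Length t of T (length of a longest path in T = maximal level).\<close>
definition tree_length :: "'a set \<Rightarrow> ('a \<times> 'a) set \<Rightarrow> 'a \<Rightarrow> nat" where
  "tree_length V T r = Max (level T r ` V)"

definition level_set :: "'a set \<Rightarrow> ('a \<times> 'a) set \<Rightarrow> 'a \<Rightarrow> nat \<Rightarrow> 'a set" where
  "level_set V T r i = {u \<in> V. level T r u = i}"

definition backward_arc :: "('a \<times> 'a) set \<Rightarrow> ('a \<times> 'a) set \<Rightarrow> 'a \<Rightarrow> 'a \<Rightarrow> bool" where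
  "backward_arc A T u v \<longleftrightarrow> (u, v) \<in> A \<and> (v, u) \<in> T\<^sup>*"

text \<open>Backward spine: vertex V_i is represented by its index i \<in> {0..t}.\<close>
definition spine_vertices :: "'a set \<Rightarrow> ('a \<times> 'a) set \<Rightarrow> 'a \<Rightarrow> nat set" where
  "spine_vertices V T r = {0..tree_length V T r}"

definition spine_edge :: "'a set \<Rightarrow> ('a \<times> 'a) set \<Rightarrow> 'a \<Rightarrow> ('a \<times> 'a) set \<Rightarrow> nat \<Rightarrow> nat \<Rightarrow> bool" where
  "spine_edge V A r T i j \<longleftrightarrow>
     (i > j \<and> (\<exists>u\<in>level_set V T r i. \<exists>v\<in>level_set V T r j. backward_arc A T u v)) \<or>
     (j > i \<and> (\<exists>u\<in>level_set V T r j. \<exists>v\<in>level_set V T r i. backward_arc A T u v))"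

definition proper_coloring :: "'b set \<Rightarrow> ('b \<Rightarrow> 'b \<Rightarrow> bool) \<Rightarrow> ('b \<Rightarrow> nat) \<Rightarrow> nat \<Rightarrow> bool" where
  "proper_coloring W E c k \<longleftrightarrow> (\<forall>x\<in>W. c x < k) \<and> (\<forall>x\<in>W. \<forall>y\<in>W. E x y \<longrightarrow> c x \<noteq> c y)"

definition chromatic_number :: "'b set \<Rightarrow> ('b \<Rightarrow> 'b \<Rightarrow> bool) \<Rightarrow> nat" where
  "chromatic_number W E = (LEAST k. \<exists>c. proper_coloring W E c k)"

definition acyclic_coloring :: "'a set \<Rightarrow> ('a \<times> 'a) set \<Rightarrow> ('a \<Rightarrow> nat) \<Rightarrow> nat \<Rightarrow> bool" where
  "acyclic_coloring V A c k \<longleftrightarrow> (\<forall>v\<in>V. c v < k) \<and>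
     (\<forall>i. acyclic (A \<inter> ({v\<in>V. c v = i} \<times> {v\<in>V. c v = i})))"

definition acyclic_chromatic_number :: "'a set \<Rightarrow> ('a \<times> 'a) set \<Rightarrow> nat" where
  "acyclic_chromatic_number V A = (LEAST k. \<exists>c. acyclic_coloring V A c k)"

end

theory Submission
  imports Defs
begin

text \<open>A monochromatic directed cycle
  would, by the classical property of depth-first search, contain a backward arc (y, w):
  take w to be the first discovered vertex of the strong component of the cycle; every
  vertex reachable from w inside that component is then a descendant of w, in particular
  the predecessor y of w on the cycle.  As y is a proper descendant of w, its level is
  larger, so (y, w) yields an edge of the backward spine between the two levels, whose
  colours therefore differ.\<close>

definition dfs_order :: "'a set \<Rightarrow> ('a \<times> 'a) set \<Rightarrow> ('a \<times> 'a) set \<Rightarrow> ('a \<Rightarrow> nat) \<Rightarrow> bool" where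
  "dfs_order V A T ord \<longleftrightarrow> inj_on ord V \<and>
     (\<forall>(u, v)\<in>T. ord u < ord v) \<and>
     (\<forall>u\<in>V. \<forall>w\<in>V. \<forall>x\<in>V. (u, w) \<in> T\<^sup>* \<and> ord u \<le> ord x \<and> ord x \<le> ord w \<longrightarrow> (u, x) \<in> T\<^sup>*) \<and>
     (\<forall>(u, v)\<in>A. ord u < ord v \<longrightarrow> (u, v) \<in> T\<^sup>*)"

lemma dfs_tree_iff:
  "dfs_tree V A r T \<longleftrightarrow> out_branching V A r T \<and> (\<exists>ord. dfs_order V A T ord)"
  unfolding dfs_tree_def dfs_order_def ..

lemma dfs_order_descendant_in_component:
  assumes ord: "dfs_order V A T ord" and AV: "A \<subseteq> V \<times> V" and RA: "R \<subseteq> A"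
    and min: "\<And>z. (w, z) \<in> R\<^sup>* \<Longrightarrow> (z, w) \<in> R\<^sup>* \<Longrightarrow> ord w \<le> ord z"
    and "(w, z) \<in> R\<^sup>*" and "(z, w) \<in> R\<^sup>*"
  shows "(w, z) \<in> T\<^sup>*"
  using assms(5,6)
proof (induction rule: rtrancl_induct)
  case base
  show ?case by simp
next
  case (step y z)
  have yz: "(y, z) \<in> A" and yV: "y \<in> V" and zV: "z \<in> V"
    using step.hyps(2) RA AV by auto
  have "(w, z) \<in> R\<^sup>+"
    using step.hyps by (rule rtrancl_into_trancl1)
  then have wV: "w \<in> V"
    using RA AV by (auto dest: tranclD)
  have wy: "(w, y) \<in> T\<^sup>*"
    using step.IH step.hyps(2) step.prems by (meson converse_rtrancl_into_rtrancl)
  show ?case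
  proof (cases "ord y < ord z")
    case True
    then have "(y, z) \<in> T\<^sup>*"
      using ord yz unfolding dfs_order_def by blast
    with wy show ?thesis by simp
  next
    case False
    have "ord w \<le> ord z"
      using min step.hyps step.prems by (meson rtrancl.rtrancl_into_rtrancl)
    with False wy wV yV zV ord show ?thesis
      unfolding dfs_order_def by (meson not_less)
  qed
qed

lemma dfs_tree_cycle_has_backward_arc:
  assumes dfs: "dfs_tree V A r T" and AV: "A \<subseteq> V \<times> V" and RA: "R \<subseteq> A"
    and cycle: "(x, x) \<in> R\<^sup>+"
  obtains y w where "(y, w) \<in> R" and "(w, y) \<in> T\<^sup>*"
proof -
  obtain ord where ord: "dfs_order V A T ord"
    using dfs unfolding dfs_tree_iff by blast
  let ?component = "\<lambda>z. (x, z) \<in> R\<^sup>* \<and> (z, x) \<in> R\<^sup>*"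
  obtain w where w: "?component w" and min: "\<And>z. ?component z \<Longrightarrow> ord w \<le> ord z"
    using ex_has_least_nat[of ?component x ord] by auto
  have "(w, w) \<in> R\<^sup>+"
    using w cycle by (meson rtrancl_trancl_trancl trancl_rtrancl_trancl)
  then obtain y where wy: "(w, y) \<in> R\<^sup>*" and yw: "(y, w) \<in> R"
    by (meson tranclD2)
  have "(w, y) \<in> T\<^sup>*"
  proof (rule dfs_order_descendant_in_component[OF ord AV RA _ wy])
    show "(y, w) \<in> R\<^sup>*"
      using yw by blast
    show "ord w \<le> ord z" if "(w, z) \<in> R\<^sup>*" and "(z, w) \<in> R\<^sup>*" for z
      using min w that by (meson rtrancl_trans)
  qed
  with yw show thesis by (rule that)
qed

lemma out_branching_relpow_unique:
  assumes ob: "out_branching V A r T" and AV: "A \<subseteq> V \<times> V"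
    and "(r, u) \<in> T ^^ n" and "(r, u) \<in> T ^^ m"
  shows "n = m"
  using assms(3,4)
proof (induction n arbitrary: u m)
  case 0
  then have "u = r" by simp
  show ?case
  proof (cases m)
    case (Suc m')
    with 0 \<open>u = r\<close> obtain y where "(y, r) \<in> T"
      by (metis relpow_Suc_E)
    with ob show ?thesis unfolding out_branching_def by blast
  qed simp
next
  case (Suc n)
  obtain x where x: "(r, x) \<in> T ^^ n" "(x, u) \<in> T"
    using Suc.prems(1) by (metis relpow_Suc_E)
  have ur: "u \<noteq> r" and uV: "u \<in> V"
    using x(2) ob AV unfolding out_branching_def by blast+
  show ?case
  proof (cases m)
    case 0
    with Suc.prems(2) ur show ?thesis by simp
  next
    case (Suc m')
    with Suc.prems(2) obtain y where y: "(r, y) \<in> T ^^ m'" "(y, u) \<in> T"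
      by (metis relpow_Suc_E)
    have "x = y"
      using ob uV ur x(2) y(2) unfolding out_branching_def by blast
    with Suc.IH[OF x(1)] y(1) Suc show ?thesis by simp
  qed
qed

lemma level_eqI:
  assumes "out_branching V A r T" and "A \<subseteq> V \<times> V" and "(r, u) \<in> T ^^ n"
  shows "level T r u = n"
proof -
  have "(r, u) \<in> T ^^ level T r u"
    unfolding level_def using assms(3) by (rule LeastI)
  with assms show ?thesis by (blast dest: out_branching_relpow_unique)
qed

lemma level_less_of_proper_descendant:
  assumes ob: "out_branching V A r T" and AV: "A \<subseteq> V \<times> V" and vV: "v \<in> V"
    and "(v, u) \<in> T\<^sup>*" and "u \<noteq> v"
  shows "level T r v < level T r u"
proof -
  obtain n where n: "(r, v) \<in> T ^^ n"
    using ob vV unfolding out_branching_def by (blast dest: rtrancl_imp_relpow)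
  obtain k where k: "(v, u) \<in> T ^^ k" and "k > 0"
    using assms(4,5) by (metis gr0I relpow_0_E rtrancl_imp_relpow)
  from n k have "(r, u) \<in> T ^^ (n + k)"
    by (auto simp: relpow_add)
  then have "level T r u = n + k"
    by (rule level_eqI[OF ob AV])
  moreover have "level T r v = n"
    using ob AV n by (rule level_eqI)
  ultimately show ?thesis using \<open>k > 0\<close> by simp
qed

lemma level_in_spine_vertices:
  assumes "finite V" and "v \<in> V"
  shows "level T r v \<in> spine_vertices V T r"
  using assms unfolding spine_vertices_def tree_length_def by auto

lemma backward_arc_spine_edge:
  assumes ob: "out_branching V A r T" and AV: "A \<subseteq> V \<times> V"
    and backward: "backward_arc A T y w" and "y \<noteq> w"
  shows "spine_edge V A r T (level T r y) (level T r w)"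
proof -
  have yV: "y \<in> V" and wV: "w \<in> V"
    using backward AV unfolding backward_arc_def by auto
  have "level T r w < level T r y"
    using ob AV wV backward \<open>y \<noteq> w\<close> unfolding backward_arc_def
    by (blast intro: level_less_of_proper_descendant)
  moreover have "y \<in> level_set V T r (level T r y)" "w \<in> level_set V T r (level T r w)"
    using yV wV by (auto simp: level_set_def)
  ultimately show ?thesis
    using backward unfolding spine_edge_def by blast
qed

lemma spine_coloring_lifts_to_acyclic_coloring:
  assumes dg: "digraph V A" and dfs: "dfs_tree V A r T"
    and proper: "proper_coloring (spine_vertices V T r) (spine_edge V A r T) c' k"
  shows "acyclic_coloring V A (\<lambda>v. c' (level T r v)) k"
proof -
  have fin: "finite V" and AV: "A \<subseteq> V \<times> V" and loopless: "\<And>v. (v, v) \<notin> A"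
    using dg unfolding digraph_def by auto
  have ob: "out_branching V A r T"
    using dfs unfolding dfs_tree_iff by blast
  have "acyclic (A \<inter> ({v\<in>V. c' (level T r v) = i} \<times> {v\<in>V. c' (level T r v) = i}))"
    (is "acyclic ?R") for i
  proof (rule acyclicI, intro allI notI)
    fix x
    assume "(x, x) \<in> ?R\<^sup>+"
    then obtain y w where yw: "(y, w) \<in> ?R" and wy: "(w, y) \<in> T\<^sup>*"
      using dfs_tree_cycle_has_backward_arc[OF dfs AV] by blast
    have "backward_arc A T y w"
      using yw wy unfolding backward_arc_def by blast
    moreover have "y \<noteq> w"
      using yw loopless by blast
    ultimately have "spine_edge V A r T (level T r y) (level T r w)"
      by (rule backward_arc_spine_edge[OF ob AV])
    then have "c' (level T r y) \<noteq> c' (level T r w)"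
      using proper yw fin unfolding proper_coloring_def by (blast intro: level_in_spine_vertices)
    with yw show False by auto
  qed
  moreover have "\<forall>v\<in>V. c' (level T r v) < k"
    using proper fin unfolding proper_coloring_def by (blast intro: level_in_spine_vertices)
  ultimately show ?thesis
    unfolding acyclic_coloring_def by blast
qed

lemma acyclic_chromatic_number_le:
  assumes "acyclic_coloring V A c k"
  shows "acyclic_chromatic_number V A \<le> k"
  unfolding acyclic_chromatic_number_def using assms by (blast intro: Least_le)

theorem mainTheorem9:
  fixes V :: "'a set" and A :: "('a \<times> 'a) set" and r :: 'a and T :: "('a \<times> 'a) set"
    and c' :: "nat \<Rightarrow> nat"
  assumes "digraph V A"
    and "strongly_connected V A"
    and "dfs_tree V A r T"
    and "tree_length V T r \<ge> 1"
    and "proper_coloring (spine_vertices V T r) (spine_edge V A r T) c'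
           (chromatic_number (spine_vertices V T r) (spine_edge V A r T))"
  shows "acyclic_coloring V A (\<lambda>v. c' (level T r v))
           (chromatic_number (spine_vertices V T r) (spine_edge V A r T))
       \<and> acyclic_chromatic_number V A
           \<le> chromatic_number (spine_vertices V T r) (spine_edge V A r T)"
proof -
  have "acyclic_coloring V A (\<lambda>v. c' (level T r v))
          (chromatic_number (spine_vertices V T r) (spine_edge V A r T))"
    using assms(1,3,5) by (rule spine_coloring_lifts_to_acyclic_coloring)
  then show ?thesis
    by (blast intro: acyclic_chromatic_number_le)
qed

end
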